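(* Let $A,B,C$ be the observer canonical realization (described in the context) of a plant $b(s)/a(s)$ that is stable (i.e. $A$ is Hurwitz) and has positive DC gain. Then the first exit time $\tau_+(\xi)$ is finite for every $\xi\in\mathbb{R}^n$.
   Context: The plant transfer function is $\frac{b(s)}{a(s)}=\frac{b_{n-1}s^{n-1}+\dots+b_0}{s^n+a_{n-1}s^{n-1}+\dots+a_0}$ with real coefficients. Its observer canonical realization is: $A$ is the $n\times n$ matrix with $A_{i+1,i}=1$ for $i=1,\dots,n-1$, last column $(-a_0,-a_1,\dots,-a_{n-1})^T$, and all other entries zero; $B=(b_0,b_1,\dots,b_{n-1})^T$; $C=(0,\dots,0,1)$. The plant is stable if $A$ is Hurwitz; its DC gain is $b_0/a_0$. The first exit time from positive sign is $\tau_+(\xi)=\inf\{t>0: Cx(t)<0\}$, where $x(\cdot)$ solves $\dot x=Ax-B$, $x(0)=\xi$. *)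

theory Defs
  imports "HOL-Analysis.Analysis" "Jordan_Normal_Form.Char_Poly"
begin

(* Indices are 0-based: paper's index k corresponds to k-1 here.
   Coefficients a_0..a_{n-1}, b_0..b_{n-1} are given as functions nat => real. *)

definition obs_A :: "nat \<Rightarrow> (nat \<Rightarrow> real) \<Rightarrow> real mat" where
  "obs_A n a = mat n n (\<lambda>(i,j). if j = n - 1 then - a i else if i = j + 1 then 1 else 0)"

definition obs_B :: "nat \<Rightarrow> (nat \<Rightarrow> real) \<Rightarrow> real vec" where
  "obs_B n b = vec n b"

definition obs_C :: "nat \<Rightarrow> real vec" where
  "obs_C n = unit_vec n (n - 1)"

definition hurwitz :: "real mat \<Rightarrow> bool" where
  "hurwitz M \<longleftrightarrow> (\<forall>z. eigenvalue (map_mat complex_of_real M) z \<longrightarrow> Re z < 0)"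

definition is_solution :: "nat \<Rightarrow> real mat \<Rightarrow> real vec \<Rightarrow> real vec \<Rightarrow> (real \<Rightarrow> real vec) \<Rightarrow> bool" where
  "is_solution n A B \<xi> x \<longleftrightarrow> x 0 = \<xi> \<and> (\<forall>t\<ge>0. dim_vec (x t) = n) \<and>
     (\<forall>t\<ge>0. \<forall>i<n. ((\<lambda>s. x s $ i) has_real_derivative ((A *\<^sub>v x t) $ i - B $ i)) (at t within {0..}))"

(* first exit time from positive sign, as an extended real (= \<infinity> if the set is empty) *)
definition tau_plus :: "real vec \<Rightarrow> (real \<Rightarrow> real vec) \<Rightarrow> ereal" where
  "tau_plus C x = Inf {ereal t | t. t > 0 \<and> C \<bullet> x t < 0}"

end

theory Submission
  imports Defs "HOL-Computational_Algebra.Fundamental_Theorem_Algebra" "HOL-Real_Asymp.Real_Asymp"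
begin

(* Shift the state by the equilibrium xe with A xe = B, whose output component is -b0/a0 < 0;
   the deviation z = x - xe solves z' = A z. Every root l of the characteristic polynomial a(s)
   is an eigenvalue of the companion matrix A, so Re l < 0. Dividing a(s) by s - l, the Horner
   combinations Z_i = sum_{j >= i} l^(j-i) z_j split the observer-form system into the scalar
   equation Z_0' = l Z_0 and an observer-form system for the quotient polynomial driven by Z_0.
   A Lyapunov estimate for scalar equations with vanishing forcing and induction on n give
   z_(n-1)(t) -> 0. Hence C x(t) -> -b0/a0 < 0, so C x turns negative at some finite time. *)

lemma linear_differential_inequality:
  fixes V V' :: "real \<Rightarrow> real"
  assumes deriv: "\<And>s. T \<le> s \<Longrightarrow> (V has_real_derivative V' s) (at s)"
    and ineq: "\<And>s. T \<le> s \<Longrightarrow> V' s \<le> m * (c - V s)"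
    and "T \<le> t"
  shows "V t \<le> c + exp (- m * (t - T)) * (V T - c)"
proof -
  define U where "U s = exp (m * s) * (V s - c)" for s
  have "U t \<le> U T"
  proof (rule DERIV_nonpos_imp_nonincreasing[OF \<open>T \<le> t\<close>])
    fix s assume s: "T \<le> s" "s \<le> t"
    have "(U has_real_derivative exp (m * s) * (V' s - m * (c - V s))) (at s)"
      unfolding U_def by (rule derivative_eq_intros deriv[OF s(1)] refl)+ (simp add: algebra_simps)
    moreover have "exp (m * s) * (V' s - m * (c - V s)) \<le> 0"
      using ineq[OF s(1)] by (simp add: mult_nonneg_nonpos)
    ultimately show "\<exists>y. (U has_real_derivative y) (at s) \<and> y \<le> 0" by blast
  qed
  then have "V t - c \<le> exp (m * T) / exp (m * t) * (V T - c)"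
    by (simp add: U_def field_simps)
  then show ?thesis
    by (simp add: exp_diff[symmetric] algebra_simps)
qed

lemma has_real_derivative_norm_squared:
  fixes p :: "real \<Rightarrow> 'a::real_inner"
  assumes "(p has_vector_derivative D) (at t)"
  shows "((\<lambda>s. (norm (p s))\<^sup>2) has_real_derivative 2 * (p t \<bullet> D)) (at t)"
  using assms unfolding power2_norm_eq_inner has_vector_derivative_def has_field_derivative_def
  by (auto intro!: derivative_eq_intros simp: inner_commute algebra_simps)

lemma inner_affine_field_le:
  fixes p F l :: complex
  assumes "Re l < 0"
  shows "2 * (p \<bullet> (l * p + F)) \<le> (norm F)\<^sup>2 / - Re l + Re l * (norm p)\<^sup>2"
proof -
  define m where "m = - Re l"
  have "m > 0" using assms by (simp add: m_def)
  have "p \<bullet> (l * p) = - m * (norm p)\<^sup>2"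
    unfolding cmod_power2 by (simp add: m_def inner_complex_def algebra_simps power2_eq_square)
  moreover have "2 * (p \<bullet> F) \<le> m * (norm p)\<^sup>2 + (norm F)\<^sup>2 / m"
  proof -
    have "2 * (p \<bullet> F) \<le> 2 * (norm p * norm F)"
      using norm_cauchy_schwarz by simp
    also have "\<dots> \<le> m * (norm p)\<^sup>2 + (norm F)\<^sup>2 / m"
    proof -
      have "0 \<le> (m * norm p - norm F)\<^sup>2 / m" using \<open>m > 0\<close> by simp
      then show ?thesis using \<open>m > 0\<close> by (simp add: field_simps power2_eq_square)
    qed
    finally show ?thesis .
  qed
  ultimately show ?thesis by (simp add: inner_add_right m_def)
qed

lemma stable_linear_ode_tendsto_zero:
  fixes p F :: "real \<Rightarrow> complex"
  assumes deriv: "\<And>t. t > 0 \<Longrightarrow> (p has_vector_derivative l * p t + F t) (at t)"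
    and "Re l < 0"
    and "(F \<longlongrightarrow> 0) at_top"
  shows "(p \<longlongrightarrow> 0) at_top"
proof (rule tendstoI)
  fix e :: real assume "e > 0"
  define m where "m = - Re l"
  have "m > 0" using \<open>Re l < 0\<close> by (simp add: m_def)
  have "\<forall>\<^sub>F t in at_top. norm (F t) < m * (e / 2) \<and> t > 0"
    using tendstoD[OF assms(3), of "m * (e / 2)"] \<open>m > 0\<close> \<open>e > 0\<close>
    by (intro eventually_conj eventually_gt_at_top) simp_all
  then obtain T where T: "\<And>t. T \<le> t \<Longrightarrow> norm (F t) < m * (e / 2) \<and> t > 0"
    unfolding eventually_at_top_linorder by blast
  define V where "V t = (norm (p t))\<^sup>2" for t
  have bound: "V t \<le> (e / 2)\<^sup>2 + exp (- m * (t - T)) * (V T - (e / 2)\<^sup>2)" if "T \<le> t" for t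
  proof (rule linear_differential_inequality[OF _ _ that])
    show "(V has_real_derivative 2 * (p s \<bullet> (l * p s + F s))) (at s)" if "T \<le> s" for s
      unfolding V_def using deriv T that by (intro has_real_derivative_norm_squared) auto
    show "2 * (p s \<bullet> (l * p s + F s)) \<le> m * ((e / 2)\<^sup>2 - V s)" if "T \<le> s" for s
    proof -
      have "(norm (F s))\<^sup>2 \<le> (m * (e / 2))\<^sup>2"
        using T[OF that] by (intro power_mono) simp_all
      then have "(norm (F s))\<^sup>2 / m \<le> m * (e / 2)\<^sup>2"
        using \<open>m > 0\<close> by (simp add: divide_le_eq power2_eq_square mult_ac)
      moreover have "2 * (p s \<bullet> (l * p s + F s)) \<le> (norm (F s))\<^sup>2 / m - m * V s"
        using inner_affine_field_le[OF \<open>Re l < 0\<close>, of "p s" "F s"] by (simp add: V_def m_def)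
      ultimately show ?thesis by (simp add: right_diff_distrib)
    qed
  qed
  have "((\<lambda>t. exp (- m * (t - T)) * (V T - (e / 2)\<^sup>2)) \<longlongrightarrow> 0) at_top"
    using \<open>m > 0\<close> by real_asymp
  then have "\<forall>\<^sub>F t in at_top. exp (- m * (t - T)) * (V T - (e / 2)\<^sup>2) < e\<^sup>2 / 2 \<and> T \<le> t"
    using \<open>e > 0\<close> by (intro eventually_conj eventually_ge_at_top order_tendstoD) auto
  then show "\<forall>\<^sub>F t in at_top. dist (p t) 0 < e"
  proof (rule eventually_mono)
    fix t assume t: "exp (- m * (t - T)) * (V T - (e / 2)\<^sup>2) < e\<^sup>2 / 2 \<and> T \<le> t"
    moreover have "e\<^sup>2 > 0" "(e / 2)\<^sup>2 = e\<^sup>2 / 4" using \<open>e > 0\<close> by (simp_all add: power_divide)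
    ultimately have "V t < e\<^sup>2" using bound[of t] by linarith
    then show "dist (p t) 0 < e" using \<open>e > 0\<close> by (simp add: V_def power_less_imp_less_base)
  qed
qed

definition monic_poly :: "nat \<Rightarrow> (nat \<Rightarrow> 'a::comm_ring_1) \<Rightarrow> 'a poly" where
  "monic_poly n c = monom 1 n + (\<Sum>i<n. monom (c i) i)"

lemma coeff_monic_poly: "coeff (monic_poly n c) i = (if i = n then 1 else if i < n then c i else 0)"
  by (auto simp: monic_poly_def coeff_sum)

lemma degree_monic_poly [simp]: "degree (monic_poly n c) = n"
proof (rule antisym)
  show "degree (monic_poly n c) \<le> n" by (rule degree_le) (auto simp: coeff_monic_poly)
  show "n \<le> degree (monic_poly n c)" by (rule le_degree) (simp add: coeff_monic_poly)
qed

lemma monic_poly_has_root: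
  fixes c :: "nat \<Rightarrow> complex"
  assumes "n \<ge> 1"
  obtains \<mu> where "poly (monic_poly n c) \<mu> = 0"
proof -
  have "\<not> (\<exists>a p. a \<noteq> 0 \<and> p = 0 \<and> monic_poly n c = pCons a p)"
    using assms by (auto dest: arg_cong[of _ _ degree])
  then show ?thesis using fundamental_theorem_of_algebra_alt that by blast
qed

lemma monic_poly_root_factor:
  fixes c :: "nat \<Rightarrow> 'a::comm_ring_1"
  assumes "poly (monic_poly (Suc m) c) l = 0"
  obtains q where "monic_poly (Suc m) c = [:-l, 1:] * monic_poly m q"
    and "q m = 1" and "c 0 = - l * q 0" and "\<And>i. i < m \<Longrightarrow> c (Suc i) = q i - l * q (Suc i)"
proof -
  define Q where "Q = synthetic_div (monic_poly (Suc m) c) l"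
  define q where "q = coeff Q"
  have factor: "monic_poly (Suc m) c = [:-l, 1:] * Q"
    using synthetic_div_correct'[of l "monic_poly (Suc m) c"] assms by (simp add: Q_def)
  have "degree Q = m" by (simp add: Q_def degree_synthetic_div)
  have coeffs: "coeff (monic_poly (Suc m) c) 0 = - l * q 0"
      "\<And>i. coeff (monic_poly (Suc m) c) (Suc i) = q i - l * q (Suc i)"
    unfolding factor q_def by simp_all
  have "q m = 1"
    using coeffs(2)[of m] \<open>degree Q = m\<close> by (simp add: coeff_monic_poly q_def coeff_eq_0)
  have "monic_poly m q = Q"
    using \<open>q m = 1\<close> \<open>degree Q = m\<close> by (intro poly_eqI) (auto simp: coeff_monic_poly q_def coeff_eq_0)
  show ?thesis
  proof
    show "monic_poly (Suc m) c = [:-l, 1:] * monic_poly m q"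
      using factor \<open>monic_poly m q = Q\<close> by simp
    show "c (Suc i) = q i - l * q (Suc i)" if "i < m" for i
      using coeffs(2)[of i] that by (simp add: coeff_monic_poly)
  qed (use coeffs(1) \<open>q m = 1\<close> in \<open>simp_all add: coeff_monic_poly\<close>)
qed

(* Componentwise form of z' = A z + f for the companion matrix A of c (see companion_mat below);
   z (n - 1) is the output. *)
definition observer_ode ::
    "nat \<Rightarrow> (nat \<Rightarrow> 'a::real_normed_field) \<Rightarrow> (nat \<Rightarrow> real \<Rightarrow> 'a) \<Rightarrow> (nat \<Rightarrow> real \<Rightarrow> 'a) \<Rightarrow> bool" where
  "observer_ode n c f z \<longleftrightarrow> (\<forall>i<n. \<forall>t>0. (z i has_vector_derivative
      (if i = 0 then 0 else z (i - 1) t) - c i * z (n - 1) t + f i t) (at t))"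

definition horner_comb :: "'a::comm_semiring_1 \<Rightarrow> nat \<Rightarrow> (nat \<Rightarrow> 'b \<Rightarrow> 'a) \<Rightarrow> nat \<Rightarrow> 'b \<Rightarrow> 'a" where
  "horner_comb l m z i t = (\<Sum>j=i..m. l ^ (j - i) * z j t)"

lemma horner_comb_step:
  assumes "i \<le> m"
  shows "horner_comb l m z i t = z i t + l * horner_comb l m z (Suc i) t"
proof -
  have "(\<Sum>j=Suc i..m. l ^ (j - i) * z j t) = l * (\<Sum>j=Suc i..m. l ^ (j - Suc i) * z j t)"
    unfolding sum_distrib_left
  proof (intro sum.cong refl)
    fix j assume "j \<in> {Suc i..m}"
    then have "j - i = Suc (j - Suc i)" by auto
    then show "l ^ (j - i) * z j t = l * (l ^ (j - Suc i) * z j t)" by (simp add: mult.assoc)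
  qed
  then show ?thesis using assms by (simp add: horner_comb_def sum.atLeast_Suc_atMost)
qed

lemma horner_comb_top [simp]: "horner_comb l m z m = z m"
  by (simp add: horner_comb_def fun_eq_iff)

lemma horner_comb_above [simp]: "horner_comb l m z (Suc m) = (\<lambda>t. 0)"
  by (simp add: horner_comb_def fun_eq_iff)

lemma observer_ode_horner_comb_deriv:
  fixes z f :: "nat \<Rightarrow> real \<Rightarrow> 'a::real_normed_field"
  assumes ode: "observer_ode (Suc m) c f z"
    and c_Suc: "\<And>i. i < m \<Longrightarrow> c (Suc i) = q i - l * q (Suc i)" and "q m = 1"
    and "1 \<le> i" "i \<le> Suc m" "t > 0"
  shows "(horner_comb l m z i has_vector_derivative
      horner_comb l m z (i - 1) t - q (i - 1) * z m t + horner_comb l m f i t) (at t)"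
  using \<open>i \<le> Suc m\<close> \<open>1 \<le> i\<close>
proof (induction i rule: inc_induct)
  case base
  show ?case using horner_comb_step[of m m l z t] \<open>q m = 1\<close> by simp
next
  case (step i)
  have "horner_comb l m z i = (\<lambda>t. z i t + l * horner_comb l m z (Suc i) t)"
    using horner_comb_step[of i m l z] step by fastforce
  moreover have "(z i has_vector_derivative z (i - 1) t - c i * z m t + f i t) (at t)"
    using ode step \<open>t > 0\<close> unfolding observer_ode_def by auto
  ultimately have "(horner_comb l m z i has_vector_derivative (z (i - 1) t - c i * z m t + f i t)
      + l * (horner_comb l m z i t - q i * z m t + horner_comb l m f (Suc i) t)) (at t)"
    using step by (auto intro!: derivative_intros)
  moreover have "c i = q (i - 1) - l * q i" using c_Suc[of "i - 1"] step by simp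
  ultimately show ?case
    using horner_comb_step[of "i - 1" m l z t] horner_comb_step[of i m l f t] step
    by (simp add: algebra_simps)
qed

lemma observer_ode_deflate:
  fixes z f :: "nat \<Rightarrow> real \<Rightarrow> 'a::real_normed_field"
  assumes ode: "observer_ode (Suc m) c f z"
    and "c 0 = - l * q 0" and "\<And>i. i < m \<Longrightarrow> c (Suc i) = q i - l * q (Suc i)" and "q m = 1"
  shows "\<And>t. t > 0 \<Longrightarrow> (horner_comb l m z 0 has_vector_derivative
      l * horner_comb l m z 0 t + horner_comb l m f 0 t) (at t)"
    and "observer_ode m q (\<lambda>i t. (if i = 0 then horner_comb l m z 0 t else 0) + horner_comb l m f (Suc i) t)
      (\<lambda>i. horner_comb l m z (Suc i))"
proof -
  note deriv = observer_ode_horner_comb_deriv[OF assms(1,3,4)]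
  show "(horner_comb l m z 0 has_vector_derivative
      l * horner_comb l m z 0 t + horner_comb l m f 0 t) (at t)" if "t > 0" for t
  proof -
    have "horner_comb l m z 0 = (\<lambda>t. z 0 t + l * horner_comb l m z 1 t)"
      using horner_comb_step[of 0 m l z] by fastforce
    moreover have "(z 0 has_vector_derivative - c 0 * z m t + f 0 t) (at t)"
      using ode \<open>t > 0\<close> unfolding observer_ode_def by auto
    ultimately have "(horner_comb l m z 0 has_vector_derivative (- c 0 * z m t + f 0 t)
        + l * (horner_comb l m z 0 t - q 0 * z m t + horner_comb l m f 1 t)) (at t)"
      using deriv[of 1 t] \<open>t > 0\<close> by (auto intro!: derivative_intros)
    then show ?thesis
      using \<open>c 0 = - l * q 0\<close> horner_comb_step[of 0 m l f t] by (simp add: algebra_simps)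
  qed
  show "observer_ode m q (\<lambda>i t. (if i = 0 then horner_comb l m z 0 t else 0) + horner_comb l m f (Suc i) t)
      (\<lambda>i. horner_comb l m z (Suc i))"
    unfolding observer_ode_def
  proof (intro allI impI)
    fix i t assume "i < m" "(t::real) > 0"
    then show "(horner_comb l m z (Suc i) has_vector_derivative
        (if i = 0 then 0 else horner_comb l m z (Suc (i - 1)) t) - q i * horner_comb l m z (Suc (m - 1)) t
          + ((if i = 0 then horner_comb l m z 0 t else 0) + horner_comb l m f (Suc i) t)) (at t)"
      using deriv[of "Suc i" t] by (cases i) (simp_all add: algebra_simps)
  qed
qed

lemma observer_ode_output_tendsto_zero:
  fixes z f :: "nat \<Rightarrow> real \<Rightarrow> complex"
  assumes "observer_ode (Suc m) c f z"
    and "\<And>\<mu>. poly (monic_poly (Suc m) c) \<mu> = 0 \<Longrightarrow> Re \<mu> < 0"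
    and "\<And>i. i \<le> m \<Longrightarrow> (f i \<longlongrightarrow> 0) at_top"
  shows "(z m \<longlongrightarrow> 0) at_top"
  using assms
proof (induction m arbitrary: c f z)
  case 0
  have "poly (monic_poly (Suc 0) c) (- c 0) = 0" by (simp add: monic_poly_def poly_monom)
  then have "Re (- c 0) < 0" using "0.prems"(2) by blast
  moreover have "(z 0 has_vector_derivative - c 0 * z 0 t + f 0 t) (at t)" if "t > 0" for t
    using "0.prems"(1) that by (simp add: observer_ode_def)
  ultimately show ?case using "0.prems"(3)[of 0] by (intro stable_linear_ode_tendsto_zero[of "z 0" "- c 0" "f 0"]) auto
next
  case (Suc m)
  obtain l where root: "poly (monic_poly (Suc (Suc m)) c) l = 0"
    using monic_poly_has_root[of "Suc (Suc m)"] by auto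
  obtain q where factor: "monic_poly (Suc (Suc m)) c = [:-l, 1:] * monic_poly (Suc m) q"
    and "q (Suc m) = 1" "c 0 = - l * q 0" "\<And>i. i < Suc m \<Longrightarrow> c (Suc i) = q i - l * q (Suc i)"
    using monic_poly_root_factor[OF root] by blast
  define Z where "Z = horner_comb l (Suc m) z"
  define G where "G = horner_comb l (Suc m) f"
  note deflate = observer_ode_deflate[OF Suc.prems(1) \<open>c 0 = _\<close> \<open>\<And>i. i < Suc m \<Longrightarrow> _\<close>
      \<open>q (Suc m) = 1\<close>, folded Z_def G_def]
  have G_lim: "(G i \<longlongrightarrow> 0) at_top" for i
    unfolding G_def horner_comb_def[abs_def]
    by (intro tendsto_null_sum tendsto_mult_right_zero) (use Suc.prems(3) in auto)
  have "Re l < 0" using Suc.prems(2) root by blast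
  then have Z0_lim: "(Z 0 \<longlongrightarrow> 0) at_top"
    using deflate(1) G_lim by (intro stable_linear_ode_tendsto_zero[of "Z 0" l "G 0"]) auto
  have "((\<lambda>i. Z (Suc i)) m \<longlongrightarrow> 0) at_top"
  proof (rule Suc.IH[OF deflate(2)])
    show "Re \<mu> < 0" if "poly (monic_poly (Suc m) q) \<mu> = 0" for \<mu>
      using Suc.prems(2)[of \<mu>] that unfolding factor by simp
    show "((\<lambda>t. (if i = 0 then Z 0 t else 0) + G (Suc i) t) \<longlongrightarrow> 0) at_top" for i
      using Z0_lim G_lim by (cases "i = 0") (auto intro: tendsto_add_zero)
  qed
  then show ?case by (simp add: Z_def)
qed

definition companion_mat :: "nat \<Rightarrow> (nat \<Rightarrow> 'a::comm_ring_1) \<Rightarrow> 'a mat" where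
  "companion_mat n c = mat n n (\<lambda>(i, j). if j = n - 1 then - c i else if i = j + 1 then 1 else 0)"

lemma obs_A_eq_companion_mat: "obs_A n a = companion_mat n a"
  by (simp add: obs_A_def companion_mat_def)

lemma map_mat_of_real_obs_A:
  "map_mat complex_of_real (obs_A n a) = companion_mat n (\<lambda>i. complex_of_real (a i))"
  by (rule eq_matI) (auto simp: obs_A_def companion_mat_def)

lemma companion_mat_mult_vec_nth:
  fixes c :: "nat \<Rightarrow> 'a::comm_ring_1"
  assumes "w \<in> carrier_vec n" and "i < n"
  shows "(companion_mat n c *\<^sub>v w) $ i = (if i = 0 then 0 else w $ (i - 1)) - c i * w $ (n - 1)"
proof -
  have "(companion_mat n c *\<^sub>v w) $ i
      = (\<Sum>j<n. (if j = n - 1 then - c i * w $ j else 0) + (if 0 < i \<and> j = i - 1 then w $ j else 0))"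
    using assms by (auto simp: companion_mat_def scalar_prod_def atLeast0LessThan intro!: sum.cong)
  also have "\<dots> = (if i = 0 then 0 else w $ (i - 1)) - c i * w $ (n - 1)"
    using assms by (simp add: sum.distrib)
  finally show ?thesis .
qed

lemma companion_mat_eigenvalue:
  fixes c :: "nat \<Rightarrow> 'a::comm_ring_1"
  assumes "poly (monic_poly (Suc m) c) \<mu> = 0"
  shows "eigenvalue (companion_mat (Suc m) c) \<mu>"
proof -
  obtain q where "q m = 1" "c 0 = - \<mu> * q 0" "\<And>i. i < m \<Longrightarrow> c (Suc i) = q i - \<mu> * q (Suc i)"
    using monic_poly_root_factor[OF assms] by blast
  define v where "v = vec (Suc m) q"
  have "companion_mat (Suc m) c *\<^sub>v v = \<mu> \<cdot>\<^sub>v v"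
  proof (rule eq_vecI)
    fix i assume "i < dim_vec (\<mu> \<cdot>\<^sub>v v)"
    then have "i < Suc m" by (simp add: v_def)
    then have "(companion_mat (Suc m) c *\<^sub>v v) $ i = (if i = 0 then 0 else q (i - 1)) - c i * q m"
      by (simp add: companion_mat_mult_vec_nth v_def)
    also have "\<dots> = \<mu> * q i"
      using \<open>q m = 1\<close> \<open>c 0 = _\<close> \<open>\<And>i. i < m \<Longrightarrow> _\<close>[of "i - 1"] \<open>i < Suc m\<close> by (cases i) simp_all
    finally show "(companion_mat (Suc m) c *\<^sub>v v) $ i = (\<mu> \<cdot>\<^sub>v v) $ i"
      using \<open>i < Suc m\<close> by (simp add: v_def)
  qed (simp add: companion_mat_def v_def)
  moreover have "v \<noteq> 0\<^sub>v (Suc m)"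
    using \<open>q m = 1\<close> by (auto simp: v_def dest!: arg_cong[of _ _ "\<lambda>v. v $ m"])
  ultimately have "eigenvector (companion_mat (Suc m) c) v \<mu>"
    unfolding eigenvector_def by (simp add: companion_mat_def v_def)
  then show ?thesis unfolding eigenvalue_def by blast
qed

lemma hurwitz_obs_A_roots:
  assumes "hurwitz (obs_A (Suc m) a)"
    and "poly (monic_poly (Suc m) (\<lambda>i. complex_of_real (a i))) \<mu> = 0"
  shows "Re \<mu> < 0"
  using assms companion_mat_eigenvalue unfolding hurwitz_def map_mat_of_real_obs_A by blast

lemma obs_equilibrium:
  assumes "a 0 \<noteq> 0"
  obtains xe :: "real vec" where "xe \<in> carrier_vec (Suc m)" and "obs_A (Suc m) a *\<^sub>v xe = obs_B (Suc m) b"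
    and "xe $ m = - b 0 / a 0"
proof
  define y where "y = - b 0 / a 0"
  define xe where "xe = vec (Suc m) (\<lambda>i. if i = m then y else a (Suc i) * y + b (Suc i))"
  show "xe \<in> carrier_vec (Suc m)" and "xe $ m = - b 0 / a 0"
    by (simp_all add: xe_def y_def)
  show "obs_A (Suc m) a *\<^sub>v xe = obs_B (Suc m) b"
  proof (rule eq_vecI)
    fix i assume "i < dim_vec (obs_B (Suc m) b)"
    then have "i < Suc m" by (simp add: obs_B_def)
    then have "(obs_A (Suc m) a *\<^sub>v xe) $ i = (if i = 0 then 0 else xe $ (i - 1)) - a i * y"
      by (simp add: obs_A_eq_companion_mat companion_mat_mult_vec_nth xe_def)
    also have "\<dots> = b i"
      using \<open>i < Suc m\<close> assms by (cases i) (simp_all add: xe_def y_def)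
    finally show "(obs_A (Suc m) a *\<^sub>v xe) $ i = obs_B (Suc m) b $ i"
      using \<open>i < Suc m\<close> by (simp add: obs_B_def)
  qed (simp add: obs_A_def obs_B_def)
qed

lemma is_solution_carrier:
  assumes "is_solution n A B \<xi> x" and "0 \<le> t"
  shows "x t \<in> carrier_vec n"
  using assms unfolding is_solution_def by (intro carrier_vecI) auto

lemma obs_C_scalar_prod:
  assumes "w \<in> carrier_vec (Suc m)"
  shows "obs_C (Suc m) \<bullet> w = w $ m"
  using assms by (simp add: obs_C_def scalar_prod_left_unit)

lemma obs_solution_deviation_observer_ode:
  fixes x :: "real \<Rightarrow> real vec" and xe :: "real vec"
  assumes sol: "is_solution n (obs_A n a) (obs_B n b) \<xi> x"
    and "xe \<in> carrier_vec n" and equilibrium: "obs_A n a *\<^sub>v xe = obs_B n b"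
  shows "observer_ode n (\<lambda>i. complex_of_real (a i)) (\<lambda>i t. 0)
      (\<lambda>i t. complex_of_real (x t $ i - xe $ i))"
  unfolding observer_ode_def
proof (intro allI impI)
  fix i t assume "i < n" "(t::real) > 0"
  have "x t \<in> carrier_vec n" using is_solution_carrier[OF sol] \<open>t > 0\<close> by simp
  have "((\<lambda>s. x s $ i) has_real_derivative (obs_A n a *\<^sub>v x t) $ i - obs_B n b $ i) (at t within {0..})"
    using sol \<open>i < n\<close> \<open>t > 0\<close> unfolding is_solution_def by auto
  then have "((\<lambda>s. x s $ i) has_real_derivative (obs_A n a *\<^sub>v x t) $ i - obs_B n b $ i) (at t within {0<..})"
    by (rule has_field_derivative_subset) auto
  moreover have "at t within {0<..} = at t" using \<open>t > 0\<close> by (intro at_within_open) auto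
  moreover have "(obs_A n a *\<^sub>v x t) $ i - obs_B n b $ i
      = (if i = 0 then 0 else x t $ (i - 1) - xe $ (i - 1)) - a i * (x t $ (n - 1) - xe $ (n - 1))"
    unfolding equilibrium[symmetric] obs_A_eq_companion_mat
    using \<open>x t \<in> carrier_vec n\<close> \<open>xe \<in> carrier_vec n\<close> \<open>i < n\<close>
    by (simp add: companion_mat_mult_vec_nth algebra_simps)
  ultimately have "((\<lambda>s. x s $ i - xe $ i) has_real_derivative
      (if i = 0 then 0 else x t $ (i - 1) - xe $ (i - 1)) - a i * (x t $ (n - 1) - xe $ (n - 1))) (at t)"
    by (auto intro!: derivative_eq_intros)
  then show "((\<lambda>t. complex_of_real (x t $ i - xe $ i)) has_vector_derivative
      (if i = 0 then 0 else complex_of_real (x t $ (i - 1) - xe $ (i - 1)))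
        - complex_of_real (a i) * complex_of_real (x t $ (n - 1) - xe $ (n - 1)) + 0) (at t)"
    by (auto dest: has_vector_derivative_of_real)
qed

lemma tau_plus_finite:
  fixes C :: "real vec"
  assumes "\<forall>\<^sub>F t in at_top. C \<bullet> x t < 0"
  shows "tau_plus C x < \<infinity>"
proof -
  obtain T where "T > 0" "C \<bullet> x T < 0"
    using eventually_happens[OF eventually_conj[OF assms eventually_gt_at_top[of 0]]] by auto
  then have "tau_plus C x \<le> ereal T"
    unfolding tau_plus_def by (intro Inf_lower) auto
  then show ?thesis using le_less_trans[of _ "ereal T" \<infinity>] by simp
qed

lemma obs_solution_output_tendsto:
  fixes x :: "real \<Rightarrow> real vec"
  assumes "hurwitz (obs_A (Suc m) a)" and "a 0 \<noteq> 0"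
    and sol: "is_solution (Suc m) (obs_A (Suc m) a) (obs_B (Suc m) b) \<xi> x"
  shows "((\<lambda>t. obs_C (Suc m) \<bullet> x t) \<longlongrightarrow> - b 0 / a 0) at_top"
proof -
  obtain xe where xe: "xe \<in> carrier_vec (Suc m)" "obs_A (Suc m) a *\<^sub>v xe = obs_B (Suc m) b"
      "xe $ m = - b 0 / a 0"
    using obs_equilibrium[of a m b] \<open>a 0 \<noteq> 0\<close> by blast
  have "((\<lambda>t. complex_of_real (x t $ m - xe $ m)) \<longlongrightarrow> 0) at_top"
    using obs_solution_deviation_observer_ode[OF sol xe(1,2)] assms(1)
    by (intro observer_ode_output_tendsto_zero hurwitz_obs_A_roots) auto
  from tendsto_Re[OF this] have "((\<lambda>t. x t $ m - xe $ m) \<longlongrightarrow> 0) at_top" by simp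
  then have "((\<lambda>t. x t $ m) \<longlongrightarrow> - b 0 / a 0) at_top"
    unfolding xe(3)[symmetric] by (rule LIM_zero_cancel)
  moreover have "\<forall>\<^sub>F t in at_top. x t $ m = obs_C (Suc m) \<bullet> x t"
    using eventually_ge_at_top[of 0]
    by eventually_elim (simp add: obs_C_scalar_prod is_solution_carrier[OF sol])
  ultimately show ?thesis by (rule Lim_transform_eventually)
qed

theorem mainTheorem1:
  fixes n :: nat and a b :: "nat \<Rightarrow> real"
  assumes "n \<ge> 1"
    and "hurwitz (obs_A n a)"
    and "b 0 / a 0 > 0"
  shows "\<forall>\<xi> x. \<xi> \<in> carrier_vec n \<longrightarrow> is_solution n (obs_A n a) (obs_B n b) \<xi> x
           \<longrightarrow> tau_plus (obs_C n) x < \<infinity>"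
proof (intro allI impI)
  fix \<xi> x assume sol: "is_solution n (obs_A n a) (obs_B n b) \<xi> x"
  obtain m where n: "n = Suc m" using \<open>n \<ge> 1\<close> by (cases n) auto
  have "a 0 \<noteq> 0" using \<open>b 0 / a 0 > 0\<close> by auto
  then have "((\<lambda>t. obs_C n \<bullet> x t) \<longlongrightarrow> - b 0 / a 0) at_top"
    using obs_solution_output_tendsto \<open>hurwitz (obs_A n a)\<close> sol unfolding n by blast
  then have "\<forall>\<^sub>F t in at_top. obs_C n \<bullet> x t < 0"
    using \<open>b 0 / a 0 > 0\<close> by (intro order_tendstoD(2)) auto
  then show "tau_plus (obs_C n) x < \<infinity>" by (rule tau_plus_finite)
qed

end
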